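(* Let $k\ge2$ be an integer and $\exp_k(x)=\sum_{T\in\mathbb P}\alpha_T x^T$. Then all coefficients $\alpha_T$ are nonnegative real numbers, for every $n\ge0$ $$\sum_{T\in\mathbb P,\ \deg T=n}\alpha_T=\frac1{n!},$$ and the radius of convergence of $\exp_k(x)$ is $\infty$.
   Context: Let $\mathbb P$ denote the set of finite planar reduced rooted trees (children of each vertex linearly ordered, no vertex with exactly one child), including the empty tree $\mathbf 1$ and the one-vertex tree $|$; $\deg(T)$ is the number of leaves. The algebra $\mathbb C\{x\}_{\mathbb P}$ has basis $\{x^T\}$, $x^{\mathbf 1}=1$, $x^|=x$, with $k$-linear operations $\omega_k$ ($k\ge2$), $\omega_k(x^{T_1},\dots,x^{T_k})=x^T$ where $T$ is obtained by attaching the nonempty $T_i$ in order as subtrees of the children of a new root (if exactly one is nonempty, $T$ is that one; if none, $T=\mathbf 1$). $\mathbb C\{\{x\}\}_{\mathbb P}$ is the algebra of formal series $\sum_T\gamma_Tx^T$, the operations extended degreewise. For $f=\sum_T\gamma_Tx^T$ and $c\in\mathbb C$ write $f(cx)=\sum_T\gamma_Tc^{\deg T}x^T$. The $k$-ary exponential series $\exp_k(x)$ is the unique $f\in\mathbb C\{\{x\}\}_{\mathbb P}$ of the form $f=1+x+(\text{terms }x^T\text{ with }\deg T\ge2)$ satisfying $\omega_k(f,\dots,f)=f(kx)$. Radius of convergence: $\operatorname{rad}(\sum_T\gamma_Tx^T)=\sup\{\rho\ge0:\sum_T|\gamma_T|\rho^{\deg T}<\infty\}$. *)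

theory Defs
  imports "HOL-Analysis.Analysis" "HOL-Library.Extended_Real"
begin

text \<open>Elements of the set P are represented as \<open>ptree option\<close>:
  \<open>None\<close> is the empty tree 1, \<open>Some (Nd [])\<close> is the one-vertex tree |.\<close>

datatype ptree = Nd "ptree list"

fun reduced :: "ptree \<Rightarrow> bool" where
  "reduced (Nd ts) = (length ts \<noteq> 1 \<and> list_all reduced ts)"

fun leaves :: "ptree \<Rightarrow> nat" where
  "leaves (Nd []) = 1"
| "leaves (Nd (t # ts)) = leaves t + sum_list (map leaves ts)"

definition PT :: "ptree option set" where
  "PT = {T. case T of None \<Rightarrow> True | Some t \<Rightarrow> reduced t}"

fun pdeg :: "ptree option \<Rightarrow> nat" where
  "pdeg None = 0"
| "pdeg (Some t) = leaves t"

definition omega :: "ptree option list \<Rightarrow> ptree option" where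
  "omega Ts = (let ne = [t. Some t \<leftarrow> Ts] in
     (case ne of [] \<Rightarrow> None | [t] \<Rightarrow> Some t | _ \<Rightarrow> Some (Nd ne)))"

type_synonym pseries = "ptree option \<Rightarrow> complex"

definition omega_ser :: "nat \<Rightarrow> pseries list \<Rightarrow> pseries" where
  "omega_ser k fs T =
     (\<Sum>Ts \<in> {Ts. length Ts = k \<and> set Ts \<subseteq> PT \<and> omega Ts = T}.
        \<Prod>i<k. (fs ! i) (Ts ! i))"

definition scale_ser :: "complex \<Rightarrow> pseries \<Rightarrow> pseries" where
  "scale_ser c f T = c ^ pdeg T * f T"

definition is_exp :: "nat \<Rightarrow> pseries \<Rightarrow> bool" where
  "is_exp k f \<longleftrightarrow>
     (\<forall>T. T \<notin> PT \<longrightarrow> f T = 0) \<and>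
     f None = 1 \<and> f (Some (Nd [])) = 1 \<and>
     (\<forall>T\<in>PT. pdeg T < 2 \<longrightarrow> T \<noteq> None \<longrightarrow> T \<noteq> Some (Nd []) \<longrightarrow> f T = 0) \<and>
     (\<forall>T\<in>PT. omega_ser k (replicate k f) T = scale_ser (of_nat k) f T)"

definition exp_k :: "nat \<Rightarrow> pseries" where
  "exp_k k = (THE f. is_exp k f)"

definition rad :: "pseries \<Rightarrow> ereal" where
  "rad f = Sup {ereal \<rho> | \<rho>. \<rho> \<ge> 0 \<and> (\<lambda>T. norm (f T) * \<rho> ^ pdeg T) summable_on PT}"

end

theory Submission
  imports Defs "HOL-Computational_Algebra.Formal_Power_Series"
begin

(* Comparing the coefficient of x^T on both sides of omega_k(f,...,f) = f(kx) gives, for a tree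
   T with n leaves whose root has m >= 2 children c_1, ..., c_m,
     (k^n - k) alpha_T = (k choose m) * alpha_(c_1) * ... * alpha_(c_m),
   since exactly k of the k-tuples (T_1, ..., T_k) with omega_k(T_1, ..., T_k) = T have a single
   nonempty entry T, and (k choose m) of them have the nonempty entries c_1, ..., c_m.  So the
   coefficients are determined recursively and are nonnegative.  Collecting the trees by degree,
   the same equation says that F(t) = sum_n (sum_(deg T = n) alpha_T) t^n satisfies
   F^k = F(kt), F(0) = 1, F'(0) = 1, and e^t is the only such power series.  Nonnegativity
   then gives sum_T |alpha_T| rho^(deg T) = e^rho < infinity for every rho. *)

unbundle no vec_syntax
unbundle fps_syntax

lemma leaves_Nd: "cs \<noteq> [] \<Longrightarrow> leaves (Nd cs) = sum_list (map leaves cs)"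
  by (cases cs) auto

lemma one_le_leaves: "1 \<le> leaves t"
  by (induction t rule: leaves.induct) auto

lemma leaves_neq_0 [simp]: "leaves t \<noteq> 0"
  using one_le_leaves[of t] by linarith

lemma length_le_sum_list_map: "\<forall>x\<in>set xs. (1::nat) \<le> g x \<Longrightarrow> length xs \<le> sum_list (map g xs)"
  by (induction xs) auto

lemma length_le_leaves: "length cs \<le> leaves (Nd cs)"
  using length_le_sum_list_map[of cs leaves] one_le_leaves by (cases "cs = []") (auto simp: leaves_Nd)

lemma leaves_child_less:
  assumes "c \<in> set cs" and "2 \<le> length cs"
  shows "leaves c < leaves (Nd cs)"
proof -
  have "cs \<noteq> []" using assms(1) by auto
  have "leaves (Nd cs) = leaves c + sum_list (map leaves (remove1 c cs))"
    unfolding leaves_Nd[OF \<open>cs \<noteq> []\<close>] by (rule sum_list_map_remove1[OF assms(1)])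
  moreover have "1 \<le> length (remove1 c cs)"
    using assms by (simp add: length_remove1)
  moreover have "length (remove1 c cs) \<le> sum_list (map leaves (remove1 c cs))"
    using one_le_leaves by (intro length_le_sum_list_map) auto
  ultimately show ?thesis by simp
qed

lemma reduced_Nd_two_le_length: "reduced (Nd cs) \<Longrightarrow> cs \<noteq> [] \<Longrightarrow> 2 \<le> length cs"
  by (cases cs) (auto simp: Suc_le_eq)

lemma reduced_leaves_less_2: "reduced t \<Longrightarrow> leaves t < 2 \<Longrightarrow> t = Nd []"
  by (cases t) (metis length_le_leaves order.strict_trans1 reduced_Nd_two_le_length not_le)

lemma finite_reduced_leaves_le: "finite {t. reduced t \<and> leaves t \<le> n}"
proof (induction n)
  case 0
  show ?case by simp
next
  case (Suc n)
  let ?small = "{t. reduced t \<and> leaves t \<le> n}"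
  have "{t. reduced t \<and> leaves t \<le> Suc n} \<subseteq>
      insert (Nd []) (Nd ` {cs. set cs \<subseteq> ?small \<and> length cs \<le> Suc n})"
  proof
    fix t assume t: "t \<in> {t. reduced t \<and> leaves t \<le> Suc n}"
    obtain cs where t_eq: "t = Nd cs" by (cases t)
    show "t \<in> insert (Nd []) (Nd ` {cs. set cs \<subseteq> ?small \<and> length cs \<le> Suc n})"
    proof (cases "cs = []")
      case False
      then have "2 \<le> length cs" using t t_eq reduced_Nd_two_le_length by blast
      then have "leaves c \<le> n" if "c \<in> set cs" for c
        using leaves_child_less[OF that] t t_eq by fastforce
      then show ?thesis
        using t t_eq length_le_leaves[of cs] by (auto simp: list_all_iff)
    qed (simp add: t_eq)
  qed
  moreover have "finite (insert (Nd []) (Nd ` {cs. set cs \<subseteq> ?small \<and> length cs \<le> Suc n}))"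
    using finite_lists_length_le[OF Suc.IH] by simp
  ultimately show ?case by (rule finite_subset)
qed

definition trees_of_degree :: "nat \<Rightarrow> ptree option set" where
  "trees_of_degree n = {T\<in>PT. pdeg T = n}"

definition trees_upto_degree :: "nat \<Rightarrow> ptree option set" where
  "trees_upto_degree n = {T\<in>PT. pdeg T \<le> n}"

definition tree_tuples :: "nat \<Rightarrow> nat \<Rightarrow> ptree option list set" where
  "tree_tuples j n = {Ts. length Ts = j \<and> set Ts \<subseteq> PT \<and> sum_list (map pdeg Ts) = n}"

lemma finite_trees_upto_degree: "finite (trees_upto_degree n)"
proof -
  have "T \<in> insert None (Some ` {t. reduced t \<and> leaves t \<le> n})" if "T \<in> trees_upto_degree n" for T
    using that by (cases T) (auto simp: trees_upto_degree_def PT_def)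
  then have "trees_upto_degree n \<subseteq> insert None (Some ` {t. reduced t \<and> leaves t \<le> n})"
    by blast
  then show ?thesis
    by (rule finite_subset) (simp add: finite_reduced_leaves_le)
qed

lemma finite_trees_of_degree: "finite (trees_of_degree n)"
  using finite_trees_upto_degree[of n]
  by (rule finite_subset[rotated]) (auto simp: trees_of_degree_def trees_upto_degree_def)

lemma finite_tree_tuples: "finite (tree_tuples j n)"
proof -
  have "tree_tuples j n \<subseteq> {Ts. set Ts \<subseteq> trees_upto_degree n \<and> length Ts \<le> j}"
    using member_le_sum_list[of _ "map pdeg _"]
    by (fastforce simp: tree_tuples_def trees_upto_degree_def)
  then show ?thesis
    using finite_lists_length_le[OF finite_trees_upto_degree] by (rule finite_subset)
qed

lemma trees_of_degree_0: "trees_of_degree 0 = {None}"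
proof -
  have "T \<in> trees_of_degree 0 \<longleftrightarrow> T = None" for T
    by (cases T) (auto simp: trees_of_degree_def PT_def)
  then show ?thesis by blast
qed

lemma trees_of_degree_1: "trees_of_degree 1 = {Some (Nd [])}"
proof -
  have "T \<in> trees_of_degree 1 \<longleftrightarrow> T = Some (Nd [])" for T
    using reduced_leaves_less_2 by (cases T) (auto simp: trees_of_degree_def PT_def)
  then show ?thesis by blast
qed

definition nonempty_trees :: "ptree option list \<Rightarrow> ptree list" where
  "nonempty_trees Ts = [t. Some t \<leftarrow> Ts]"

lemma nonempty_trees_simps [simp]:
  "nonempty_trees [] = []"
  "nonempty_trees (T # Ts) = (case T of None \<Rightarrow> nonempty_trees Ts | Some t \<Rightarrow> t # nonempty_trees Ts)"
  by (auto simp: nonempty_trees_def split: option.splits)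

lemma prod_list_nonempty_trees:
  "f None = 1 \<Longrightarrow> prod_list (map f Ts) = prod_list (map (f \<circ> Some) (nonempty_trees Ts))"
  by (induction Ts) (auto split: option.splits)

lemma sum_list_pdeg_nonempty_trees:
  "sum_list (map pdeg Ts) = sum_list (map leaves (nonempty_trees Ts))"
  by (induction Ts) (auto split: option.splits)

lemma set_subset_PT_iff: "set Ts \<subseteq> PT \<longleftrightarrow> list_all reduced (nonempty_trees Ts)"
  by (induction Ts) (auto simp: PT_def split: option.splits)

lemma omega_conv_nonempty_trees:
  "omega Ts = (case nonempty_trees Ts of [] \<Rightarrow> None | [t] \<Rightarrow> Some t | ts \<Rightarrow> Some (Nd ts))"
  unfolding omega_def Let_def nonempty_trees_def[symmetric] by (auto split: list.splits)

lemma omega_eq_None_iff: "omega Ts = None \<longleftrightarrow> nonempty_trees Ts = []"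
  by (auto simp: omega_conv_nonempty_trees split: list.splits)

lemma omega_eq_Some_iff:
  "omega Ts = Some t \<longleftrightarrow>
     nonempty_trees Ts = [t] \<or> (2 \<le> length (nonempty_trees Ts) \<and> t = Nd (nonempty_trees Ts))"
  by (auto simp: omega_conv_nonempty_trees split: list.splits)

lemma omega_in_PT: "set Ts \<subseteq> PT \<Longrightarrow> omega Ts \<in> PT"
  unfolding set_subset_PT_iff by (auto simp: omega_conv_nonempty_trees PT_def split: list.splits)

lemma pdeg_omega: "pdeg (omega Ts) = sum_list (map pdeg Ts)"
  by (auto simp: omega_conv_nonempty_trees sum_list_pdeg_nonempty_trees split: list.splits)

definition padded_lists :: "nat \<Rightarrow> ptree list \<Rightarrow> ptree option list set" where
  "padded_lists k cs = {Ts. length Ts = k \<and> nonempty_trees Ts = cs}"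

lemma padded_lists_Suc:
  "padded_lists (Suc k) cs = Cons None ` padded_lists k cs \<union>
     (case cs of [] \<Rightarrow> {} | c # cs' \<Rightarrow> Cons (Some c) ` padded_lists k cs')"
proof (rule set_eqI)
  fix Ts
  show "Ts \<in> padded_lists (Suc k) cs \<longleftrightarrow> Ts \<in> Cons None ` padded_lists k cs \<union>
     (case cs of [] \<Rightarrow> {} | c # cs' \<Rightarrow> Cons (Some c) ` padded_lists k cs')"
    by (cases Ts) (auto simp: padded_lists_def image_iff split: list.splits option.splits)
qed

lemma finite_card_padded_lists:
  "finite (padded_lists k cs) \<and> card (padded_lists k cs) = k choose length cs"
proof (induction k arbitrary: cs)
  case 0
  have "padded_lists 0 cs = (if cs = [] then {[]} else {})"
    by (auto simp: padded_lists_def)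
  then show ?case by simp
next
  case (Suc k)
  show ?case
  proof (cases cs)
    case Nil
    then show ?thesis
      using Suc[of "[]"] by (simp add: padded_lists_Suc card_image)
  next
    case (Cons c cs')
    have "Cons None ` padded_lists k cs \<inter> Cons (Some c) ` padded_lists k cs' = {}"
      by auto
    then show ?thesis
      using Suc[of cs] Suc[of cs'] by (simp add: padded_lists_Suc Cons card_image card_Un_disjoint)
  qed
qed

lemma sum_prod_list_padded_lists:
  assumes "f None = 1"
  shows "(\<Sum>Ts\<in>padded_lists k cs. prod_list (map f Ts)) =
           of_nat (k choose length cs) * prod_list (map (f \<circ> Some) cs)"
proof -
  have "(\<Sum>Ts\<in>padded_lists k cs. prod_list (map f Ts)) =
          (\<Sum>Ts\<in>padded_lists k cs. prod_list (map (f \<circ> Some) cs))"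
    by (rule sum.cong) (auto simp: padded_lists_def prod_list_nonempty_trees[of f, OF assms])
  then show ?thesis
    using finite_card_padded_lists[of k cs] by simp
qed

lemma omega_preimage_None:
  "{Ts. length Ts = k \<and> set Ts \<subseteq> PT \<and> omega Ts = None} = padded_lists k []"
  by (auto simp: padded_lists_def omega_eq_None_iff set_subset_PT_iff)

lemma omega_preimage_Nd:
  assumes "reduced (Nd cs)"
  shows "{Ts. length Ts = k \<and> set Ts \<subseteq> PT \<and> omega Ts = Some (Nd cs)} =
           padded_lists k [Nd cs] \<union> (if 2 \<le> length cs then padded_lists k cs else {})"
  using assms by (auto simp: padded_lists_def omega_eq_Some_iff set_subset_PT_iff list_all_iff)

section \<open>The functional equation as a recursion\<close>

lemma prod_lessThan_length_nth: "(\<Prod>i<length xs. f (xs ! i)) = prod_list (map f xs)"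
  by (induction xs) (simp_all add: prod.lessThan_Suc_shift del: prod.lessThan_Suc)

lemma omega_ser_None:
  assumes "f None = 1"
  shows "omega_ser k (replicate k f) None = 1"
proof -
  have "omega_ser k (replicate k f) None = (\<Sum>Ts\<in>padded_lists k []. prod_list (map f Ts))"
    unfolding omega_ser_def omega_preimage_None
    by (rule sum.cong) (auto simp: padded_lists_def prod_lessThan_length_nth)
  then show ?thesis
    using sum_prod_list_padded_lists[of f, OF assms, of k "[]"] by simp
qed

lemma omega_ser_Nd:
  assumes "f None = 1" and "reduced (Nd cs)"
  shows "omega_ser k (replicate k f) (Some (Nd cs)) = of_nat k * f (Some (Nd cs)) +
     (if 2 \<le> length cs then of_nat (k choose length cs) * prod_list (map (f \<circ> Some) cs) else 0)"
proof -
  let ?P = "if 2 \<le> length cs then padded_lists k cs else {}"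
  have "omega_ser k (replicate k f) (Some (Nd cs)) =
      (\<Sum>Ts\<in>padded_lists k [Nd cs] \<union> ?P. prod_list (map f Ts))"
    unfolding omega_ser_def omega_preimage_Nd[OF assms(2)]
    by (rule sum.cong) (auto simp: padded_lists_def prod_lessThan_length_nth split: if_splits)
  also have "\<dots> = (\<Sum>Ts\<in>padded_lists k [Nd cs]. prod_list (map f Ts)) + (\<Sum>Ts\<in>?P. prod_list (map f Ts))"
    by (rule sum.union_disjoint)
      (auto simp: finite_card_padded_lists, auto simp: padded_lists_def dest: arg_cong[of _ _ length])
  finally show ?thesis
    using sum_prod_list_padded_lists[of f, OF assms(1)] by simp
qed

lemma of_nat_power_neq_self:
  assumes "2 \<le> k" and "2 \<le> n"
  shows "(of_nat k ^ n :: 'a::semiring_char_0) \<noteq> of_nat k"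
proof -
  have "k < k ^ 2" using assms by (simp add: power2_eq_square)
  also have "\<dots> \<le> k ^ n" using assms by (intro power_increasing) auto
  finally show ?thesis by (metis nat_neq_iff of_nat_eq_iff of_nat_power)
qed

lemma omega_ser_Nd_eq_scale_iff:
  assumes "2 \<le> k" and "f None = 1" and "reduced (Nd cs)" and "2 \<le> length cs"
  shows "omega_ser k (replicate k f) (Some (Nd cs)) = scale_ser (of_nat k) f (Some (Nd cs)) \<longleftrightarrow>
     f (Some (Nd cs)) = of_nat (k choose length cs) * prod_list (map (f \<circ> Some) cs) /
                          (of_nat k ^ leaves (Nd cs) - of_nat k)"
proof -
  have "2 \<le> leaves (Nd cs)" using assms(4) length_le_leaves order.trans by blast
  then have "(of_nat k ^ leaves (Nd cs) - of_nat k :: complex) \<noteq> 0"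
    using of_nat_power_neq_self[OF assms(1)] by simp
  then show ?thesis
    using assms(4) by (auto simp: omega_ser_Nd[of f, OF assms(2,3)] scale_ser_def field_simps)
qed

lemma is_exp_iff_recursion:
  assumes "2 \<le> k"
  shows "is_exp k f \<longleftrightarrow> (\<forall>T. T \<notin> PT \<longrightarrow> f T = 0) \<and> f None = 1 \<and> f (Some (Nd [])) = 1 \<and>
     (\<forall>cs. reduced (Nd cs) \<longrightarrow> 2 \<le> length cs \<longrightarrow>
        f (Some (Nd cs)) = of_nat (k choose length cs) * prod_list (map (f \<circ> Some) cs) /
                             (of_nat k ^ leaves (Nd cs) - of_nat k))"
    (is "_ \<longleftrightarrow> ?support \<and> ?root \<and> ?leaf \<and> ?rec")
proof
  assume exp: "is_exp k f"
  then have root: "f None = 1" by (simp add: is_exp_def)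
  have ?rec
  proof (intro allI impI)
    fix cs assume red: "reduced (Nd cs)" and len: "2 \<le> length cs"
    then have "Some (Nd cs) \<in> PT" by (simp add: PT_def)
    then have "omega_ser k (replicate k f) (Some (Nd cs)) = scale_ser (of_nat k) f (Some (Nd cs))"
      using exp by (simp add: is_exp_def)
    then show "f (Some (Nd cs)) = of_nat (k choose length cs) * prod_list (map (f \<circ> Some) cs) /
                                     (of_nat k ^ leaves (Nd cs) - of_nat k)"
      using omega_ser_Nd_eq_scale_iff[where f = f, OF assms root red len] by simp
  qed
  then show "?support \<and> ?root \<and> ?leaf \<and> ?rec"
    using exp by (simp add: is_exp_def)
next
  assume rhs: "?support \<and> ?root \<and> ?leaf \<and> ?rec"
  have "omega_ser k (replicate k f) T = scale_ser (of_nat k) f T" if "T \<in> PT" for T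
  proof (cases T)
    case None
    then show ?thesis using rhs omega_ser_None by (simp add: scale_ser_def)
  next
    case (Some t)
    obtain cs where t: "t = Nd cs" by (cases t)
    have red: "reduced (Nd cs)" using that Some t by (simp add: PT_def)
    show ?thesis
    proof (cases "cs = []")
      case True
      then show ?thesis using rhs Some t omega_ser_Nd[of f, OF _ red] by (simp add: scale_ser_def)
    next
      case False
      then show ?thesis
        using rhs Some t red reduced_Nd_two_le_length omega_ser_Nd_eq_scale_iff[OF assms] by simp
    qed
  qed
  moreover have "pdeg T < 2 \<Longrightarrow> T \<noteq> None \<Longrightarrow> T \<noteq> Some (Nd []) \<Longrightarrow> T \<notin> PT" for T
    using reduced_leaves_less_2 by (auto simp: PT_def split: option.splits)
  ultimately show "is_exp k f"
    using rhs by (auto simp: is_exp_def)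
qed

lemma is_exp_Nd:
  assumes "2 \<le> k" and "is_exp k f" and "reduced (Nd cs)" and "2 \<le> length cs"
  shows "f (Some (Nd cs)) = of_nat (k choose length cs) * prod_list (map (f \<circ> Some) cs) /
                              (of_nat k ^ leaves (Nd cs) - of_nat k)"
  using is_exp_iff_recursion[OF assms(1), THEN iffD1, OF assms(2)] assms(3,4) by blast

lemma is_exp_unique:
  assumes "2 \<le> k" and "is_exp k g" and "is_exp k h"
  shows "g = h"
proof
  have g: "g None = 1" "g (Some (Nd [])) = 1" and h: "h None = 1" "h (Some (Nd [])) = 1"
    using assms(2,3) by (simp_all add: is_exp_def)
  have on_reduced: "reduced t \<Longrightarrow> g (Some t) = h (Some t)" for t
  proof (induction t)
    case (Nd cs)
    show ?case
    proof (cases "cs = []")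
      case False
      have children: "map (g \<circ> Some) cs = map (h \<circ> Some) cs"
        using Nd by (auto simp: list_all_iff)
      have len: "2 \<le> length cs"
        using False Nd.prems reduced_Nd_two_le_length by blast
      show ?thesis
        unfolding is_exp_Nd[OF assms(1,2) Nd.prems len] is_exp_Nd[OF assms(1,3) Nd.prems len] children ..
    qed (simp add: g h)
  qed
  have outside: "g T = h T" if "T \<notin> PT" for T
    using that assms(2,3) by (simp add: is_exp_def)
  show "g T = h T" for T
  proof (cases T)
    case (Some t)
    then show ?thesis
      using on_reduced outside by (cases "reduced t") (auto simp: PT_def)
  qed (simp add: g h)
qed

section \<open>The explicit solution\<close>

fun exp_coeff :: "nat \<Rightarrow> ptree \<Rightarrow> real" where
  "exp_coeff k (Nd cs) = (if cs = [] then 1 else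
     of_nat (k choose length cs) * prod_list (map (exp_coeff k) cs) /
       (of_nat k ^ leaves (Nd cs) - of_nat k))"

definition exp_series :: "nat \<Rightarrow> pseries" where
  "exp_series k T =
     (case T of None \<Rightarrow> 1 | Some t \<Rightarrow> if reduced t then of_real (exp_coeff k t) else 0)"

lemma exp_coeff_nonneg:
  assumes "1 \<le> k"
  shows "0 \<le> exp_coeff k t"
proof (induction t)
  case (Nd cs)
  have "(of_nat k :: real) \<le> of_nat k ^ leaves (Nd cs)"
    using assms one_le_leaves[of "Nd cs"]
    by (metis of_nat_le_iff of_nat_power power_increasing power_one_right)
  moreover have "0 \<le> prod_list (map (exp_coeff k) cs)"
    using Nd.IH by (intro prod_list_nonneg) auto
  ultimately show ?case by simp
qed

lemma exp_series_nonneg: "1 \<le> k \<Longrightarrow> exp_series k T \<in> \<real> \<and> 0 \<le> Re (exp_series k T)"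
  using exp_coeff_nonneg by (auto simp: exp_series_def split: option.splits)

lemma of_real_prod_list: "of_real (prod_list xs) = prod_list (map of_real xs)"
  by (induction xs) auto

lemma is_exp_exp_series:
  assumes "2 \<le> k"
  shows "is_exp k (exp_series k)"
proof -
  have "exp_series k (Some (Nd cs)) =
          of_nat (k choose length cs) * prod_list (map (exp_series k \<circ> Some) cs) /
            (of_nat k ^ leaves (Nd cs) - of_nat k)"
    if "reduced (Nd cs)" and "2 \<le> length cs" for cs
  proof -
    have "prod_list (map (exp_series k \<circ> Some) cs) = of_real (prod_list (map (exp_coeff k) cs))"
      using that(1) unfolding of_real_prod_list
      by (auto simp: exp_series_def list_all_iff intro!: arg_cong[where f = prod_list])
    then show ?thesis
      using that by (auto simp: exp_series_def)
  qed
  then show ?thesis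
    by (auto simp: is_exp_iff_recursion[OF assms] exp_series_def PT_def split: option.splits)
qed

lemma exp_k_eq_exp_series: "2 \<le> k \<Longrightarrow> exp_k k = exp_series k"
  unfolding exp_k_def by (blast intro: is_exp_exp_series is_exp_unique)

lemma is_exp_exp_k: "2 \<le> k \<Longrightarrow> is_exp k (exp_k k)"
  by (simp add: exp_k_eq_exp_series is_exp_exp_series)

section \<open>The degree generating function\<close>

definition degree_fps :: "pseries \<Rightarrow> complex fps" where
  "degree_fps f = Abs_fps (\<lambda>n. \<Sum>T\<in>trees_of_degree n. f T)"

lemma degree_fps_nth [simp]: "degree_fps f $ n = (\<Sum>T\<in>trees_of_degree n. f T)"
  by (simp add: degree_fps_def)

lemma degree_fps_power_nth:
  "(degree_fps f ^ j) $ n = (\<Sum>Ts\<in>tree_tuples j n. prod_list (map f Ts))"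
proof (induction j arbitrary: n)
  case 0
  have "tree_tuples 0 n = (if n = 0 then {[]} else {})"
    by (auto simp: tree_tuples_def)
  then show ?case by simp
next
  case (Suc j)
  let ?S = "SIGMA T:trees_upto_degree n. tree_tuples j (n - pdeg T)"
  have tuples_Suc: "tree_tuples (Suc j) n = (\<lambda>(T, Ts). T # Ts) ` ?S"
  proof (rule set_eqI)
    fix Ts
    show "Ts \<in> tree_tuples (Suc j) n \<longleftrightarrow> Ts \<in> (\<lambda>(T, Ts). T # Ts) ` ?S"
      by (cases Ts) (auto simp: tree_tuples_def trees_upto_degree_def image_iff)
  qed
  have "inj_on (\<lambda>(T, Ts). T # Ts) ?S"
    by (auto simp: inj_on_def)
  then have "(\<Sum>Ts\<in>tree_tuples (Suc j) n. prod_list (map f Ts)) =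
      (\<Sum>(T, Ts)\<in>?S. f T * prod_list (map f Ts))"
    unfolding tuples_Suc by (simp add: sum.reindex case_prod_unfold)
  also have "\<dots> = (\<Sum>T\<in>trees_upto_degree n. \<Sum>Ts\<in>tree_tuples j (n - pdeg T). f T * prod_list (map f Ts))"
    by (rule sum.Sigma[symmetric]) (simp_all add: finite_trees_upto_degree finite_tree_tuples)
  also have "\<dots> = (\<Sum>T\<in>trees_upto_degree n. f T * (degree_fps f ^ j) $ (n - pdeg T))"
    by (simp add: Suc.IH sum_distrib_left)
  also have "\<dots> = (\<Sum>i\<in>{0..n}. \<Sum>T\<in>{T \<in> trees_upto_degree n. pdeg T = i}.
                     f T * (degree_fps f ^ j) $ (n - pdeg T))"
    by (rule sum.group[symmetric, OF finite_trees_upto_degree finite_atLeastAtMost])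
      (auto simp: trees_upto_degree_def)
  also have "\<dots> = (\<Sum>i\<in>{0..n}. degree_fps f $ i * (degree_fps f ^ j) $ (n - i))"
  proof (rule sum.cong[OF refl])
    fix i assume "i \<in> {0..n}"
    then have "{T \<in> trees_upto_degree n. pdeg T = i} = trees_of_degree i"
      by (auto simp: trees_upto_degree_def trees_of_degree_def)
    then show "(\<Sum>T\<in>{T \<in> trees_upto_degree n. pdeg T = i}. f T * (degree_fps f ^ j) $ (n - pdeg T)) =
               degree_fps f $ i * (degree_fps f ^ j) $ (n - i)"
      by (simp add: sum_distrib_right trees_of_degree_def)
  qed
  also have "\<dots> = (degree_fps f ^ Suc j) $ n"
    by (simp add: fps_mult_nth)
  finally show ?case ..
qed

text \<open>Since \<open>omega\<close> adds degrees, summing the functional equation over the trees of degree \<open>n\<close>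
  counts every \<open>k\<close>-tuple of total degree \<open>n\<close> exactly once.\<close>

lemma is_exp_degree_fps_power_nth:
  assumes "is_exp k f"
  shows "(degree_fps f ^ k) $ n = of_nat k ^ n * degree_fps f $ n"
proof -
  have "(degree_fps f ^ k) $ n =
      (\<Sum>T\<in>trees_of_degree n. \<Sum>Ts\<in>{Ts \<in> tree_tuples k n. omega Ts = T}. prod_list (map f Ts))"
    unfolding degree_fps_power_nth
    by (rule sum.group[symmetric, OF finite_tree_tuples finite_trees_of_degree])
      (auto simp: tree_tuples_def trees_of_degree_def omega_in_PT pdeg_omega)
  also have "\<dots> = (\<Sum>T\<in>trees_of_degree n. omega_ser k (replicate k f) T)"
  proof (rule sum.cong[OF refl])
    fix T assume "T \<in> trees_of_degree n"
    then have "{Ts \<in> tree_tuples k n. omega Ts = T} = {Ts. length Ts = k \<and> set Ts \<subseteq> PT \<and> omega Ts = T}"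
      by (auto simp: tree_tuples_def trees_of_degree_def pdeg_omega)
    then show "(\<Sum>Ts\<in>{Ts \<in> tree_tuples k n. omega Ts = T}. prod_list (map f Ts)) =
               omega_ser k (replicate k f) T"
      by (auto simp: omega_ser_def prod_lessThan_length_nth intro!: sum.cong)
  qed
  also have "\<dots> = (\<Sum>T\<in>trees_of_degree n. of_nat k ^ n * f T)"
    using assms by (intro sum.cong) (auto simp: is_exp_def trees_of_degree_def scale_ser_def)
  also have "\<dots> = of_nat k ^ n * degree_fps f $ n"
    by (simp add: sum_distrib_left)
  finally show ?thesis .
qed

text \<open>The coefficient of \<open>t\<^sup>n\<close> in \<open>F\<^sup>k - G\<^sup>k = (F - G) (F\<^sup>k\<^sup>-\<^sup>1 + \<dots> + G\<^sup>k\<^sup>-\<^sup>1)\<close> is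
  \<open>k (F_n - G_n)\<close> once \<open>F\<close> and \<open>G\<close> agree below \<open>n\<close>; it also equals \<open>k\<^sup>n (F_n - G_n)\<close>.\<close>

lemma fps_eq_if_power_eq_scale:
  fixes F G :: "'a::{idom, ring_char_0} fps"
  assumes "2 \<le> k"
    and F: "\<And>n. (F ^ k) $ n = of_nat k ^ n * F $ n" and G: "\<And>n. (G ^ k) $ n = of_nat k ^ n * G $ n"
    and "F $ 0 = 1" and "G $ 0 = 1" and "F $ 1 = G $ 1"
  shows "F = G"
proof (rule fps_ext)
  fix n show "F $ n = G $ n"
  proof (induction n rule: less_induct)
    case (less n)
    show ?case
    proof (cases "2 \<le> n")
      case False
      then have "n = 0 \<or> n = 1" by auto
      then show ?thesis using assms by auto
    next
      case True
      then obtain m where m: "n = Suc m" by (cases n) auto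
      define H where "H = (\<Sum>i<k. G ^ (k - Suc i) * F ^ i)"
      have "H $ 0 = of_nat k"
        using assms by (simp add: H_def fps_sum_nth fps_power_zeroth)
      have "(F ^ k - G ^ k) $ n = ((F - G) * H) $ n"
        by (simp add: H_def power_diff_sumr2)
      also have "\<dots> = (\<Sum>i=0..m. (F - G) $ i * H $ (n - i)) + (F - G) $ n * H $ 0"
        by (simp add: fps_mult_nth m sum.atLeast0_atMost_Suc)
      also have "(\<Sum>i=0..m. (F - G) $ i * H $ (n - i)) = 0"
        using less.IH m by (intro sum.neutral) auto
      finally have "(of_nat k ^ n - of_nat k) * (F $ n - G $ n) = 0"
        using F G \<open>H $ 0 = of_nat k\<close> by (simp add: algebra_simps)
      then show ?thesis
        using of_nat_power_neq_self[OF assms(1) True] by simp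
    qed
  qed
qed

lemma is_exp_degree_fps:
  assumes "2 \<le> k" and "is_exp k f"
  shows "degree_fps f = fps_exp 1"
proof (rule fps_eq_if_power_eq_scale[OF assms(1)])
  show "(degree_fps f ^ k) $ n = of_nat k ^ n * degree_fps f $ n" for n
    using assms(2) by (rule is_exp_degree_fps_power_nth)
  show "(fps_exp 1 ^ k) $ n = of_nat k ^ n * fps_exp (1::complex) $ n" for n
    by (simp add: fps_exp_power_mult)
  have "degree_fps f $ 0 = f None" "degree_fps f $ 1 = f (Some (Nd []))"
    unfolding degree_fps_nth trees_of_degree_0 trees_of_degree_1 by simp_all
  then show "degree_fps f $ 0 = 1" "degree_fps f $ 1 = fps_exp 1 $ 1"
    using assms(2) by (simp_all add: is_exp_def)
qed simp

section \<open>Radius of convergence\<close>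

lemma summable_on_PT_if_degree_sums_summable:
  fixes g :: "ptree option \<Rightarrow> real"
  assumes nonneg: "\<And>T. T \<in> PT \<Longrightarrow> 0 \<le> g T"
    and summable: "summable (\<lambda>n. \<Sum>T\<in>trees_of_degree n. g T)"
  shows "g summable_on PT"
proof (rule nonneg_bdd_above_summable_on[OF nonneg])
  show "bdd_above (sum g ` {F. F \<subseteq> PT \<and> finite F})"
  proof (rule bdd_aboveI2)
    fix F assume F: "F \<in> {F. F \<subseteq> PT \<and> finite F}"
    define N where "N = Max (pdeg ` F)"
    have "F \<subseteq> trees_upto_degree N"
      using F by (auto simp: trees_upto_degree_def N_def)
    then have "sum g F \<le> sum g (trees_upto_degree N)"
      using nonneg by (intro sum_mono2[OF finite_trees_upto_degree]) (auto simp: trees_upto_degree_def)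
    also have "\<dots> = (\<Sum>i\<in>{0..N}. \<Sum>T\<in>trees_of_degree i. g T)"
      by (subst sum.group[symmetric, OF finite_trees_upto_degree finite_atLeastAtMost, of pdeg])
        (auto simp: trees_upto_degree_def trees_of_degree_def intro!: sum.cong)
    also have "\<dots> \<le> (\<Sum>n. \<Sum>T\<in>trees_of_degree n. g T)"
      using nonneg by (intro sum_le_suminf[OF summable]) (auto simp: trees_of_degree_def intro: sum_nonneg)
    finally show "sum g F \<le> (\<Sum>n. \<Sum>T\<in>trees_of_degree n. g T)" .
  qed
qed

lemma rad_eq_infinity_if_nonneg:
  assumes nonneg: "\<And>T. T \<in> PT \<Longrightarrow> f T \<in> \<real> \<and> 0 \<le> Re (f T)"
    and summable: "\<And>\<rho>. 0 \<le> \<rho> \<Longrightarrow> summable (\<lambda>n. Re (degree_fps f $ n) * \<rho> ^ n)"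
  shows "rad f = \<infinity>"
proof -
  have "(\<lambda>T. norm (f T) * \<rho> ^ pdeg T) summable_on PT" if "0 \<le> \<rho>" for \<rho>
  proof (rule summable_on_PT_if_degree_sums_summable)
    have "norm (f T) = Re (f T)" if "T \<in> PT" for T
      using nonneg[OF that] by (simp add: cmod_eq_Re complex_is_Real_iff)
    then have "(\<Sum>T\<in>trees_of_degree n. norm (f T) * \<rho> ^ pdeg T) = Re (degree_fps f $ n) * \<rho> ^ n" for n
      by (simp add: trees_of_degree_def sum_distrib_right)
    then show "summable (\<lambda>n. \<Sum>T\<in>trees_of_degree n. norm (f T) * \<rho> ^ pdeg T)"
      using summable[OF that] by simp
  qed (use that in simp)
  then have "{ereal \<rho> | \<rho>. \<rho> \<ge> 0 \<and> (\<lambda>T. norm (f T) * \<rho> ^ pdeg T) summable_on PT} = ereal ` {0..}"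
    by auto
  then have "rad f = (SUP \<rho>\<in>{0..}. ereal \<rho>)"
    by (simp add: rad_def)
  also have "\<dots> = \<infinity>"
    by (rule SUP_PInfty) (auto intro!: bexI[of _ "real _"])
  finally show ?thesis .
qed

theorem mainTheorem6:
  fixes k :: nat
  assumes "k \<ge> 2"
  shows "(\<forall>T\<in>PT. exp_k k T \<in> \<real> \<and> Re (exp_k k T) \<ge> 0)
       \<and> (\<forall>n::nat. (\<Sum>T\<in>{T\<in>PT. pdeg T = n}. exp_k k T) = 1 / of_nat (fact n))
       \<and> rad (exp_k k) = \<infinity>"
proof -
  have nonneg: "exp_k k T \<in> \<real> \<and> 0 \<le> Re (exp_k k T)" for T
    using assms exp_series_nonneg[of k T] by (simp add: exp_k_eq_exp_series)
  have fps: "degree_fps (exp_k k) = fps_exp 1"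
    by (rule is_exp_degree_fps[OF assms is_exp_exp_k[OF assms]])
  have degree_sums: "(\<Sum>T\<in>{T\<in>PT. pdeg T = n}. exp_k k T) = 1 / of_nat (fact n)" for n
    using arg_cong[OF fps, of "\<lambda>F. F $ n"] by (simp add: trees_of_degree_def)
  have "rad (exp_k k) = \<infinity>"
  proof (rule rad_eq_infinity_if_nonneg)
    have "Re (degree_fps (exp_k k) $ n) = inverse (fact n)" for n
      using Re_complex_of_real[of "inverse (fact n)"] by (simp add: fps divide_inverse)
    then show "summable (\<lambda>n. Re (degree_fps (exp_k k) $ n) * \<rho> ^ n)" for \<rho>
      using summable_exp[of \<rho>] by simp
  qed (rule nonneg)
  with nonneg degree_sums show ?thesis
    by simp
qed

end
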